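(* Let $n\in\mathbb N$, let $H_0,\dots,H_n$ be self-adjoint in $\mathcal H$, and let $f\in\mathscr W_n(\mathbb R)$. Then $f^{[n]}u^{(1,\dots,1)}\in\mathfrak{BS}(\mathbb R^{n+1})$, and hence $\mathbf T^{H_0,\dots,H_n}_{f^{[n]}}$ is a well-defined multilinear map $\mathbf X_{H_1}\times\cdots\times\mathbf X_{H_n}\to\mathcal B(\mathcal H)$, where $\mathbf X_H$ denotes the vector space of relatively $H$-bounded operators. More generally, if $\alpha=(\alpha_1,\dots,\alpha_n)\in\{0,1\}^n$ and $f\in\mathscr W^n_{|\alpha|}(\mathbb R)$ (with $|\alpha|=\alpha_1+\dots+\alpha_n$), then $f^{[n]}u^\alpha\in\mathfrak{BS}(\mathbb R^{n+1})$, and hence $\mathbf T^{H_0,\dots,H_n}_{f^{[n]}}$ is a well-defined multilinear map $\mathbf X^{\alpha_1}_{H_1}\times\cdots\times\mathbf X^{\alpha_n}_{H_n}\to\mathcal B(\mathcal H)$, where $\mathbf X^1_H=\mathbf X_H$ and $\mathbf X^0_H=\mathcal B(\mathcal H)$.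
   Context: $\mathcal H$ is a separable Hilbert space. $u(x)=x-i$, $u^m$ denotes $x\mapsto(x-i)^m$, and for $\alpha\in\mathbb Z_{\ge0}^n$, $u^\alpha(\lambda_0,\dots,\lambda_n)=\prod_{j=1}^n(\lambda_j-i)^{\alpha_j}$. $W_0(\mathbb R)$ is the set of $g\in C_0(\mathbb R)$ with $g(x)=\int e^{ixy}d\mu(y)$ for a finite complex Borel measure $\mu$. $\mathscr W_n(\mathbb R)=\{f\in C^n(\mathbb R):(fu^p)^{(p)}\in W_0(\mathbb R),\ p=0,\dots,n\}$ and, for $k\le n$, $\mathscr W^n_k(\mathbb R)=\{f\in C^n(\mathbb R):(fu^p)^{(n-k+p)}\in W_0(\mathbb R),\ p=0,\dots,k\}$. $V$ is relatively $H$-bounded if $\mathrm{dom}H\subseteq\mathrm{dom}V$ and $\|V\psi\|\le a\|H\psi\|+b\|\psi\|$ ($\psi\in\mathrm{dom}H$) for some $a,b\ge0$. Divided differences: $f^{[0]}=f$, $f^{[m]}(\lambda_0,\dots,\lambda_m)=\frac{f^{[m-1]}(\lambda_0,\dots,\lambda_{m-1})-f^{[m-1]}(\lambda_1,\dots,\lambda_m)}{\lambda_0-\lambda_m}$, extended continuously. $\mathfrak{BS}(\mathbb R^{n+1})$: functions $\phi(\lambda_0,\dots,\lambda_n)=\int_\Omega a_0(\lambda_0,\omega)\cdots a_n(\lambda_n,\omega)d\omega$ for a finite measure space $(\Omega,d\omega)$ and bounded measurable $a_j:\mathbb R\times\Omega\to\mathbb C$; for such $\phi$ and bounded $X_j$,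 $T^{H_0,\dots,H_n}_\phi(X_1,\dots,X_n)\psi=\int_\Omega a_0(H_0,\omega)X_1\cdots X_na_n(H_n,\omega)\psi\,d\omega$. For $V_j$ relatively $H_j$-bounded (bounded if $\alpha_j=0$) with $\phi u^\alpha\in\mathfrak{BS}$: $\mathbf T^{H_0,\dots,H_n}_\phi(V_1,\dots,V_n):=T^{H_0,\dots,H_n}_{\phi u^\alpha}(V_1(H_1-i)^{-\alpha_1},\dots,V_n(H_n-i)^{-\alpha_n})$. *)

theory Defs
  imports "HOL-Analysis.Analysis"
begin

definition vderiv :: "(real \<Rightarrow> complex) \<Rightarrow> real \<Rightarrow> complex" where
  "vderiv g = (\<lambda>x. vector_derivative g (at x))"

definition Cn :: "nat \<Rightarrow> (real \<Rightarrow> complex) set" where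
  "Cn n = {f. (\<forall>k<n. \<forall>x. ((vderiv ^^ k) f has_vector_derivative (vderiv ^^ Suc k) f x) (at x))
             \<and> (\<forall>k\<le>n. continuous_on UNIV ((vderiv ^^ k) f))}"

text \<open>A finite complex Borel measure is represented as h dM with M a finite positive Borel measure
  and h an M-integrable complex density.\<close>
definition W0 :: "(real \<Rightarrow> complex) set" where
  "W0 = {g. continuous_on UNIV g \<and> (g \<longlongrightarrow> 0) at_infinity \<and>
        (\<exists>(M::real measure) (h::real \<Rightarrow> complex). finite_measure M \<and> sets M = sets borel \<and>
            integrable M h \<and>
            (\<forall>x. g x = (LINT y|M. exp (\<i> * complex_of_real (x * y)) * h y)))}"

definition u_pow :: "nat \<Rightarrow> real \<Rightarrow> complex" where
  "u_pow m = (\<lambda>x. (complex_of_real x - \<i>) ^ m)"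

definition Wn :: "nat \<Rightarrow> (real \<Rightarrow> complex) set" where
  "Wn n = {f. f \<in> Cn n \<and> (\<forall>p\<le>n. (vderiv ^^ p) (\<lambda>x. f x * u_pow p x) \<in> W0)}"

definition Wnk :: "nat \<Rightarrow> nat \<Rightarrow> (real \<Rightarrow> complex) set" where
  "Wnk n k = {f. f \<in> Cn n \<and> (\<forall>p\<le>k. (vderiv ^^ (n - k + p)) (\<lambda>x. f x * u_pow p x) \<in> W0)}"

definition cext :: "('a::topological_space) set \<Rightarrow> ('a \<Rightarrow> complex) \<Rightarrow> 'a \<Rightarrow> complex" where
  "cext S g = (\<lambda>x. if x \<in> S then g x else Lim (at x within S) g)"

text \<open>Divided differences; a point (lambda_0,...,lambda_m) is a function l :: nat => real
  (only coordinates 0..m matter), with the product topology.\<close>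
primrec divdiff :: "nat \<Rightarrow> (real \<Rightarrow> complex) \<Rightarrow> (nat \<Rightarrow> real) \<Rightarrow> complex" where
  "divdiff 0 f = (\<lambda>l. f (l 0))"
| "divdiff (Suc m) f = cext {l. l 0 \<noteq> l (Suc m)}
      (\<lambda>l. (divdiff m f l - divdiff m f (\<lambda>j. l (Suc j))) / complex_of_real (l 0 - l (Suc m)))"

definition u_multi :: "nat \<Rightarrow> (nat \<Rightarrow> nat) \<Rightarrow> (nat \<Rightarrow> real) \<Rightarrow> complex" where
  "u_multi n \<alpha> = (\<lambda>l. \<Prod>j\<in>{1..n}. (complex_of_real (l j) - \<i>) ^ \<alpha> j)"

text \<open>BS(R^(n+1)): integral projective tensor products; the finite measure space Omega
  is taken on the carrier type nat => real.\<close>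
definition BS :: "nat \<Rightarrow> ((nat \<Rightarrow> real) \<Rightarrow> complex) \<Rightarrow> bool" where
  "BS n \<phi> \<longleftrightarrow> (\<exists>(M::(nat \<Rightarrow> real) measure) (a::nat \<Rightarrow> real \<Rightarrow> (nat \<Rightarrow> real) \<Rightarrow> complex).
      finite_measure M \<and>
      (\<forall>j\<le>n. (\<lambda>(x, w). a j x w) \<in> borel_measurable (borel \<Otimes>\<^sub>M M)) \<and>
      (\<forall>j\<le>n. \<exists>B. \<forall>x w. norm (a j x w) \<le> B) \<and>
      (\<forall>l. \<phi> l = (LINT w|M. (\<Prod>j\<in>{0..n}. a j (l j) w))))"

end

(*
  At pairwise distinct nodes the divided difference has the Lagrange form
  sum_i f(l_i) / prod_(j /= i) (l_i - l_j), and multiplying it by l_j - i for each j in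
  J = {j. alpha_j = 1} expands it into a signed sum, over T <= J, of divided differences of
  f u^|T| on the nodes outside J - T.  By the Hermite-Genocchi formula each of these is an
  iterated integral over a simplex of the derivative of order n - |alpha| + |T|, which lies in
  W_0 and so is the Fourier transform of a finite measure.  Substituting this into the simplex
  integral exhibits each term as the integral of a bounded density against
  exp(i sum_j l_j theta_j), a form stable under sums and relabelling of the variables and
  visibly in BS.  Both sides are continuous, so the identity extends from distinct nodes to
  all nodes.
*)
theory Submission
  imports Defs "HOL-Probability.Probability_Measure"
begin

section \<open>Divided differences at distinct nodes\<close>

text \<open>The Lagrange form of the divided difference of F at the nodes l i, i \<in> A; it is
  the divided difference only when l is injective on A.\<close>
definition lagrange_dd :: "nat set \<Rightarrow> (real \<Rightarrow> complex) \<Rightarrow> (nat \<Rightarrow> real) \<Rightarrow> complex" where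
  "lagrange_dd A F l = (\<Sum>i\<in>A. F (l i) / (\<Prod>j\<in>A - {i}. complex_of_real (l i - l j)))"

lemma lagrange_dd_singleton [simp]: "lagrange_dd {a} F l = F (l a)"
  by (simp add: lagrange_dd_def)

lemma lagrange_dd_reindex:
  assumes "inj_on s B"
  shows "lagrange_dd (s ` B) F l = lagrange_dd B F (\<lambda>j. l (s j))"
proof -
  have "(\<Prod>j\<in>s ` B - {s i}. complex_of_real (l (s i) - l j))
      = (\<Prod>j\<in>B - {i}. complex_of_real (l (s i) - l (s j)))" if "i \<in> B" for i
  proof -
    have "s ` B - {s i} = s ` (B - {i})"
      using assms that by (auto simp: inj_on_def)
    then show ?thesis
      using assms by (simp add: prod.reindex inj_on_diff)
  qed
  then show ?thesis
    unfolding lagrange_dd_def using assms by (simp add: sum.reindex)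
qed

lemma lagrange_dd_cong:
  assumes "\<And>i. i \<in> A \<Longrightarrow> F (l i) = G (l i)"
  shows "lagrange_dd A F l = lagrange_dd A G l"
  unfolding lagrange_dd_def using assms by simp

lemma lagrange_dd_mult_right:
  "lagrange_dd A (\<lambda>x. F x * c) l = lagrange_dd A F l * c"
  by (simp add: lagrange_dd_def sum_distrib_right)

lemma lagrange_dd_diff:
  "lagrange_dd A (\<lambda>x. F x - G x) l = lagrange_dd A F l - lagrange_dd A G l"
  by (simp add: lagrange_dd_def diff_divide_distrib sum_subtractf)

lemma lagrange_dd_mult_node_factor:
  assumes "finite A" "inj_on l A" "a \<in> A"
  shows "lagrange_dd A (\<lambda>x. F x * complex_of_real (x - l a)) l = lagrange_dd (A - {a}) F l"
proof -
  have "F (l i) * complex_of_real (l i - l a) / (\<Prod>j\<in>A - {i}. complex_of_real (l i - l j))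
      = F (l i) / (\<Prod>j\<in>A - {a} - {i}. complex_of_real (l i - l j))" if i: "i \<in> A - {a}" for i
  proof -
    have "A - {i} = insert a (A - {a} - {i})"
      using i assms(3) by auto
    moreover have "complex_of_real (l i - l a) \<noteq> 0"
      using i assms(2,3) by (auto simp: inj_on_def)
    ultimately show ?thesis
      using assms(1) by simp
  qed
  then show ?thesis
    unfolding lagrange_dd_def using assms(1,3) by (simp add: sum.remove)
qed

lemma lagrange_dd_times_linear:
  assumes "finite A" "inj_on l A" "j \<in> A"
  shows "lagrange_dd A F l * (complex_of_real (l j) - c)
     = lagrange_dd A (\<lambda>x. F x * (complex_of_real x - c)) l - lagrange_dd (A - {j}) F l"
proof -
  have "lagrange_dd A (\<lambda>x. F x * complex_of_real (x - l j)) l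
      = lagrange_dd A (\<lambda>x. F x * (complex_of_real x - c) - F x * (complex_of_real (l j) - c)) l"
    by (simp add: algebra_simps)
  also have "\<dots> = lagrange_dd A (\<lambda>x. F x * (complex_of_real x - c)) l
      - lagrange_dd A F l * (complex_of_real (l j) - c)"
    by (simp only: lagrange_dd_diff lagrange_dd_mult_right)
  finally show ?thesis
    using lagrange_dd_mult_node_factor[OF assms] by (simp add: algebra_simps)
qed

lemma lagrange_dd_recurrence:
  assumes "finite A" "inj_on l A" "a \<in> A" "b \<in> A"
  shows "lagrange_dd A F l * complex_of_real (l a - l b)
     = lagrange_dd (A - {b}) F l - lagrange_dd (A - {a}) F l"
proof -
  have "lagrange_dd A F l * complex_of_real (l a - l b)
      = lagrange_dd A (\<lambda>x. F x * complex_of_real (x - l b) - F x * complex_of_real (x - l a)) l"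
    by (simp only: flip: lagrange_dd_mult_right) (simp add: algebra_simps)
  also have "\<dots> = lagrange_dd A (\<lambda>x. F x * complex_of_real (x - l b)) l
      - lagrange_dd A (\<lambda>x. F x * complex_of_real (x - l a)) l"
    by (rule lagrange_dd_diff)
  finally show ?thesis
    by (simp only: lagrange_dd_mult_node_factor assms)
qed

lemma lagrange_dd_const_eq_0:
  assumes "finite A" "inj_on l A" "2 \<le> card A"
  shows "lagrange_dd A (\<lambda>_. c) l = 0"
  using assms
proof (induction "card A - 2" arbitrary: A)
  case 0
  then obtain a b where "A = {a, b}" "a \<noteq> b"
    by (metis card_2_iff le_antisym diff_is_0_eq)
  with 0 show ?case
    using lagrange_dd_recurrence[of A l a b "\<lambda>_. c"] by (auto simp: insert_Diff_if inj_on_def)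
next
  case (Suc k)
  then obtain a b where ab: "a \<in> A" "b \<in> A" "a \<noteq> b"
    by (metis card_le_Suc_iff numeral_2_eq_2 insert_iff)
  have "lagrange_dd (A - {x}) (\<lambda>_. c) l = 0" if "x \<in> A" for x
    using Suc that by (intro Suc.hyps) (auto intro: inj_on_subset)
  then have "lagrange_dd A (\<lambda>_. c) l * complex_of_real (l a - l b) = 0"
    using lagrange_dd_recurrence[OF Suc.prems(1,2) ab(1,2)] ab by simp
  moreover have "l a \<noteq> l b"
    using Suc.prems(2) ab by (auto simp: inj_on_def)
  ultimately show ?case by simp
qed

lemma lagrange_dd_eq_slopes:
  assumes "finite A" "inj_on l A" "a \<in> A" "2 \<le> card A"
  shows "lagrange_dd A F l
    = lagrange_dd (A - {a}) (\<lambda>x. (F x - F (l a)) / complex_of_real (x - l a)) l"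
proof -
  have "lagrange_dd A F l = lagrange_dd A (\<lambda>x. F x - F (l a)) l"
    using assms by (simp add: lagrange_dd_diff lagrange_dd_const_eq_0)
  also have "\<dots> = lagrange_dd A (\<lambda>x. (F x - F (l a)) / complex_of_real (x - l a) * complex_of_real (x - l a)) l"
    by (rule lagrange_dd_cong) (auto simp: inj_on_def)
  also have "\<dots> = lagrange_dd (A - {a}) (\<lambda>x. (F x - F (l a)) / complex_of_real (x - l a)) l"
    using assms(1-3) by (rule lagrange_dd_mult_node_factor)
  finally show ?thesis .
qed

lemma lagrange_dd_affine:
  assumes "finite A" "s \<noteq> 0"
  shows "complex_of_real s ^ (card A - 1) * lagrange_dd A F (\<lambda>i. s * l i + c)
    = lagrange_dd A (\<lambda>x. F (s * x + c)) l"
proof -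
  have "(\<Prod>j\<in>A - {i}. complex_of_real (s * l i + c - (s * l j + c)))
      = complex_of_real s ^ (card A - 1) * (\<Prod>j\<in>A - {i}. complex_of_real (l i - l j))" if "i \<in> A" for i
  proof -
    have "(\<Prod>j\<in>A - {i}. complex_of_real (s * l i + c - (s * l j + c)))
        = (\<Prod>j\<in>A - {i}. complex_of_real s * complex_of_real (l i - l j))"
      by (simp add: algebra_simps)
    then show ?thesis
      using assms that by (simp add: prod.distrib)
  qed
  then show ?thesis
    unfolding lagrange_dd_def sum_distrib_left using assms by (intro sum.cong) auto
qed

lemma sum_Pow_insert:
  assumes "finite J" "j \<notin> J"
  shows "(\<Sum>T\<in>Pow (insert j J). g T) = (\<Sum>T\<in>Pow J. g T) + (\<Sum>T\<in>Pow J. g (insert j T))"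
proof -
  have "(\<Sum>T\<in>Pow (insert j J). g T) = (\<Sum>T\<in>Pow J. g T) + (\<Sum>T\<in>insert j ` Pow J. g T)"
    unfolding Pow_insert using assms by (intro sum.union_disjoint) auto
  also have "(\<Sum>T\<in>insert j ` Pow J. g T) = (\<Sum>T\<in>Pow J. g (insert j T))"
    using assms by (subst sum.reindex) (auto intro!: inj_onI)
  finally show ?thesis .
qed

lemma lagrange_dd_times_prod_linear:
  assumes "finite A" "inj_on l A" "J \<subseteq> A"
  shows "lagrange_dd A F l * (\<Prod>j\<in>J. complex_of_real (l j) - c)
     = (\<Sum>T\<in>Pow J. (-1) ^ card (J - T)
          * lagrange_dd (A - (J - T)) (\<lambda>x. F x * (complex_of_real x - c) ^ card T) l)"
proof -
  have "finite J"
    using assms(1,3) by (rule finite_subset[rotated])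
  then show ?thesis
    using assms
  proof (induction J arbitrary: A F rule: finite_induct)
    case empty
    then show ?case by simp
  next
    case (insert j J)
    define u where "u x = complex_of_real x - c" for x
    have A': "finite (A - {j})" "inj_on l (A - {j})" "J \<subseteq> A - {j}"
      using insert by (auto intro: inj_on_subset)
    have "lagrange_dd A F l * (\<Prod>i\<in>insert j J. u (l i))
        = (lagrange_dd A F l * u (l j)) * (\<Prod>i\<in>J. u (l i))"
      using insert.hyps by (simp add: mult_ac)
    also have "\<dots> = lagrange_dd A (\<lambda>x. F x * u x) l * (\<Prod>i\<in>J. u (l i))
        - lagrange_dd (A - {j}) F l * (\<Prod>i\<in>J. u (l i))"
      using insert.prems by (simp add: u_def lagrange_dd_times_linear left_diff_distrib)
    also have "\<dots> = (\<Sum>T\<in>Pow J. (-1) ^ card (J - T) * lagrange_dd (A - (J - T)) (\<lambda>x. F x * u x ^ Suc (card T)) l)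
        - (\<Sum>T\<in>Pow J. (-1) ^ card (J - T) * lagrange_dd (A - {j} - (J - T)) (\<lambda>x. F x * u x ^ card T) l)"
      using insert.IH[of A "\<lambda>x. F x * u x"] insert.IH[OF A'] insert.prems
      by (simp add: u_def mult.assoc)
    also have "\<dots> = (\<Sum>T\<in>Pow (insert j J). (-1) ^ card (insert j J - T)
        * lagrange_dd (A - (insert j J - T)) (\<lambda>x. F x * u x ^ card T) l)"
    proof -
      have "insert j J - insert j T = J - T" "card (insert j T) = Suc (card T)" if "T \<in> Pow J" for T
        using that insert.hyps finite_subset[of T J] by (auto simp: card_insert_if)
      moreover have "insert j J - T = insert j (J - T)" "card (insert j (J - T)) = Suc (card (J - T))"
        "A - insert j (J - T) = A - {j} - (J - T)" if "T \<in> Pow J" for T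
        using that insert.hyps by auto
      ultimately show ?thesis
        using insert.hyps by (simp add: sum_Pow_insert sum_negf[symmetric])
    qed
    finally show ?case
      unfolding u_def .
  qed
qed

section \<open>Smoothness classes\<close>

lemma Cn_mono: "F \<in> Cn n \<Longrightarrow> m \<le> n \<Longrightarrow> F \<in> Cn m"
  unfolding Cn_def mem_Collect_eq by (meson le_trans less_le_trans)

lemma Cn_continuous_deriv: "F \<in> Cn m \<Longrightarrow> k \<le> m \<Longrightarrow> continuous_on UNIV ((vderiv ^^ k) F)"
  by (simp add: Cn_def)

lemma Cn_0: "F \<in> Cn 0 \<longleftrightarrow> continuous_on UNIV F"
  by (simp add: Cn_def)

lemma Cn_has_vector_derivative:
  assumes "F \<in> Cn (Suc m)"
  shows "(F has_vector_derivative vderiv F x) (at x)"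
proof -
  have "((vderiv ^^ 0) F has_vector_derivative (vderiv ^^ Suc 0) F x) (at x)"
    using assms unfolding Cn_def by blast
  then show ?thesis
    by simp
qed

lemma Cn_vderiv:
  assumes "F \<in> Cn (Suc m)"
  shows "vderiv F \<in> Cn m"
proof -
  have shift: "(vderiv ^^ k) (vderiv F) = (vderiv ^^ Suc k) F" for k
    by (simp only: funpow_Suc_right comp_apply)
  show ?thesis
    using assms unfolding Cn_def mem_Collect_eq shift
  proof (intro conjI allI impI; elim conjE)
    fix k x
    assume "k < m" "\<forall>k<Suc m. \<forall>x. ((vderiv ^^ k) F has_vector_derivative (vderiv ^^ Suc k) F x) (at x)"
    then show "((vderiv ^^ Suc k) F has_vector_derivative (vderiv ^^ Suc (Suc k)) F x) (at x)"
      by (metis Suc_less_eq)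
  next
    fix k
    assume "k \<le> m" "\<forall>k\<le>Suc m. continuous_on UNIV ((vderiv ^^ k) F)"
    then show "continuous_on UNIV ((vderiv ^^ Suc k) F)"
      by (metis Suc_le_mono)
  qed
qed

lemma Cn_SucI:
  assumes F: "\<And>x. (F has_vector_derivative F' x) (at x)" and "continuous_on UNIV F" "F' \<in> Cn n"
  shows "F \<in> Cn (Suc n)"
proof -
  have "vderiv F = F'"
    unfolding vderiv_def using F by (auto intro!: vector_derivative_at)
  then have shift: "(vderiv ^^ Suc k) F = (vderiv ^^ k) F'" for k
    by (simp only: funpow_Suc_right comp_apply)
  show ?thesis
    unfolding Cn_def mem_Collect_eq
  proof (intro conjI allI impI)
    fix k x assume "k < Suc n"
    show "((vderiv ^^ k) F has_vector_derivative (vderiv ^^ Suc k) F x) (at x)"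
    proof (cases k)
      case 0
      then show ?thesis
        using F shift[of 0] by simp
    next
      case (Suc k')
      then show ?thesis
        using \<open>F' \<in> Cn n\<close> \<open>k < Suc n\<close> unfolding Suc shift Cn_def by blast
    qed
  next
    fix k assume "k \<le> Suc n"
    show "continuous_on UNIV ((vderiv ^^ k) F)"
    proof (cases k)
      case 0
      then show ?thesis
        using \<open>continuous_on UNIV F\<close> by simp
    next
      case (Suc k')
      then show ?thesis
        using \<open>F' \<in> Cn n\<close> \<open>k \<le> Suc n\<close> unfolding Suc shift Cn_def by blast
    qed
  qed
qed

lemma Cn_add: "F \<in> Cn n \<Longrightarrow> G \<in> Cn n \<Longrightarrow> (\<lambda>x. F x + G x) \<in> Cn n"
proof (induction n arbitrary: F G)
  case 0
  then show ?case
    by (simp add: Cn_0 continuous_on_add)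
next
  case (Suc n)
  show ?case
  proof (rule Cn_SucI)
    show "((\<lambda>x. F x + G x) has_vector_derivative vderiv F x + vderiv G x) (at x)" for x
      using Suc.prems by (intro has_vector_derivative_add Cn_has_vector_derivative)
    show "continuous_on UNIV (\<lambda>x. F x + G x)"
      using Suc.prems Cn_continuous_deriv[of _ "Suc n" 0] by (simp add: continuous_on_add)
    show "(\<lambda>x. vderiv F x + vderiv G x) \<in> Cn n"
      using Suc.prems by (intro Suc.IH Cn_vderiv)
  qed
qed

lemma Cn_mult_linear:
  assumes "f \<in> Cn n"
  shows "(\<lambda>x. f x * (complex_of_real x - c)) \<in> Cn n"
  using assms
proof (induction n arbitrary: f)
  case 0
  then show ?case
    by (simp add: Cn_0 continuous_intros)
next
  case (Suc n)
  show ?case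
  proof (rule Cn_SucI)
    fix x
    have "((\<lambda>x. complex_of_real x - c) has_vector_derivative 1) (at x)"
      using has_vector_derivative_diff[OF has_vector_derivative_of_real[OF DERIV_ident]
          has_vector_derivative_const[of c]] by simp
    from has_vector_derivative_mult[OF Cn_has_vector_derivative[OF Suc.prems] this]
    show "((\<lambda>x. f x * (complex_of_real x - c)) has_vector_derivative
        vderiv f x * (complex_of_real x - c) + f x) (at x)"
      by (simp add: add.commute)
  next
    show "continuous_on UNIV (\<lambda>x. f x * (complex_of_real x - c))"
      using Cn_continuous_deriv[OF Suc.prems, of 0] by (simp add: continuous_intros)
    show "(\<lambda>x. vderiv f x * (complex_of_real x - c) + f x) \<in> Cn n"
      using Suc.prems by (intro Cn_add Suc.IH Cn_vderiv) (auto intro: Cn_mono)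
  qed
qed

lemma Cn_mult_u_pow:
  assumes "f \<in> Cn n"
  shows "(\<lambda>x. f x * u_pow p x) \<in> Cn n"
proof (induction p)
  case 0
  then show ?case using assms by (simp add: u_pow_def)
next
  case (Suc p)
  have "(\<lambda>x. f x * u_pow (Suc p) x) = (\<lambda>x. (f x * u_pow p x) * (complex_of_real x - \<i>))"
    by (simp add: u_pow_def algebra_simps)
  then show ?case
    using Cn_mult_linear[OF Suc.IH] by simp
qed

section \<open>The Hermite--Genocchi formula\<close>

text \<open>The Hermite--Genocchi integral of G over the simplex spanned by l 0, ..., l m, computed by
  integrating out the barycentric coordinate t of the last vertex, whose marginal density is
  proportional to (1 - t)^m.\<close>
primrec hermite_genocchi :: "nat \<Rightarrow> (real \<Rightarrow> complex) \<Rightarrow> (nat \<Rightarrow> real) \<Rightarrow> complex" where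
  "hermite_genocchi 0 G l = G (l 0)"
| "hermite_genocchi (Suc m) G l =
     integral {0..1} (\<lambda>t. (1 - t) ^ m *\<^sub>R hermite_genocchi m G (\<lambda>i. (1 - t) * l i + t * l (Suc m)))"

lemma continuous_on_hermite_genocchi:
  assumes "continuous_on UNIV G"
  shows "continuous_on UNIV (hermite_genocchi m G)"
proof (induction m)
  case 0
  have "continuous_on UNIV (\<lambda>l::nat \<Rightarrow> real. G (l 0))"
    by (rule continuous_on_compose2[OF assms continuous_on_product_coordinates]) auto
  moreover have "hermite_genocchi 0 G = (\<lambda>l. G (l 0))"
    by (rule ext) simp
  ultimately show ?case
    by simp
next
  case (Suc m)
  have coordinate: "continuous_on S (\<lambda>p. fst p i)" for S :: "((nat \<Rightarrow> real) \<times> real) set" and i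
    using continuous_on_product_then_coordinatewise[OF continuous_on_fst[OF continuous_on_id']]
    by (simp only: id_apply)
  have "continuous_on (UNIV \<times> cbox 0 1)
      (\<lambda>(l, t). (1 - t) ^ m *\<^sub>R hermite_genocchi m G (\<lambda>i. (1 - t) * l i + t * l (Suc m)))"
    unfolding case_prod_beta
    by (intro continuous_intros continuous_on_compose2[OF Suc.IH] coordinate) auto
  then have "continuous_on UNIV (\<lambda>l. integral (cbox 0 1)
      (\<lambda>t. (1 - t) ^ m *\<^sub>R hermite_genocchi m G (\<lambda>i. (1 - t) * l i + t * l (Suc m))))"
    by (rule integral_continuous_on_param)
  moreover have "hermite_genocchi (Suc m) G = (\<lambda>l. integral (cbox 0 1)
      (\<lambda>t. (1 - t) ^ m *\<^sub>R hermite_genocchi m G (\<lambda>i. (1 - t) * l i + t * l (Suc m))))"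
    by (rule ext) simp
  ultimately show ?case
    by simp
qed

lemma has_integral_segment_derivative:
  fixes F F' :: "real \<Rightarrow> complex"
  assumes F: "\<And>x. (F has_vector_derivative F' x) (at x)" and "a \<noteq> b"
  shows "((\<lambda>t. F' ((1 - t) * a + t * b)) has_integral (F b - F a) / complex_of_real (b - a)) {0..1}"
proof -
  have path: "((\<lambda>t. (1 - t) * a + t * b) has_vector_derivative (b - a)) (at t)" for t
    by (auto intro!: derivative_eq_intros simp: has_real_derivative_iff_has_vector_derivative[symmetric])
  have chain: "((\<lambda>t. F ((1 - t) * a + t * b)) has_vector_derivative
      (b - a) *\<^sub>R F' ((1 - t) * a + t * b)) (at t)" for t
  proof -
    have "((F \<circ> (\<lambda>t. (1 - t) * a + t * b)) has_vector_derivative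
        (b - a) *\<^sub>R F' ((1 - t) * a + t * b)) (at t)"
      by (rule vector_diff_chain_at[OF path F])
    then show ?thesis
      by (simp only: comp_def)
  qed
  have "((\<lambda>t. (b - a) *\<^sub>R F' ((1 - t) * a + t * b))
      has_integral F ((1 - 1) * a + 1 * b) - F ((1 - 0) * a + 0 * b)) {0..1}"
    by (rule fundamental_theorem_of_calculus) (auto intro: has_vector_derivative_at_within[OF chain])
  then have "((\<lambda>t. (b - a) *\<^sub>R F' ((1 - t) * a + t * b)) has_integral F b - F a) {0..1}"
    by simp
  then have "((\<lambda>t. (b - a) *\<^sub>R F' ((1 - t) * a + t * b) / complex_of_real (b - a))
      has_integral (F b - F a) / complex_of_real (b - a)) {0..1}"
    by (rule has_integral_divide)
  moreover have "(\<lambda>t. (b - a) *\<^sub>R F' ((1 - t) * a + t * b) / complex_of_real (b - a))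
      = (\<lambda>t. F' ((1 - t) * a + t * b))"
    using \<open>a \<noteq> b\<close> by (simp add: scaleR_conv_of_real)
  ultimately show ?thesis
    by (simp only:)
qed

lemma integral_lagrange_dd:
  assumes "finite A" "\<And>i. i \<in> A \<Longrightarrow> (\<lambda>t. h t (l i)) integrable_on S"
  shows "integral S (\<lambda>t. lagrange_dd A (h t) l) = lagrange_dd A (\<lambda>x. integral S (\<lambda>t. h t x)) l"
  unfolding lagrange_dd_def using assms by (simp add: integral_sum integrable_on_divide)

lemma lagrange_dd_Suc_eq_integral:
  assumes F: "\<And>x. (F has_vector_derivative F' x) (at x)" and inj: "inj_on l {0..Suc m}"
  shows "lagrange_dd {0..Suc m} F l
    = integral {0..1} (\<lambda>t. lagrange_dd {0..m} (\<lambda>x. F' ((1 - t) * x + t * l (Suc m))) l)"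
proof -
  define c where "c = l (Suc m)"
  have node_ne: "l i \<noteq> c" if "i \<in> {0..m}" for i
    using inj_onD[OF inj, of i "Suc m"] that unfolding c_def by auto
  have slope: "integral {0..1} (\<lambda>t. F' ((1 - t) * l i + t * c)) = (F (l i) - F c) / complex_of_real (l i - c)"
    if "i \<in> {0..m}" for i
  proof -
    have "integral {0..1} (\<lambda>t. F' ((1 - t) * l i + t * c)) = (F c - F (l i)) / complex_of_real (c - l i)"
      using has_integral_segment_derivative[OF F node_ne[OF that]] by (rule integral_unique)
    also have "\<dots> = (F (l i) - F c) / complex_of_real (l i - c)"
      by (metis minus_diff_eq minus_divide_divide of_real_minus)
    finally show ?thesis .
  qed
  have "{0..Suc m} - {Suc m} = {0..m}"
    by auto
  then have "lagrange_dd {0..Suc m} F l = lagrange_dd {0..m} (\<lambda>x. (F x - F c) / complex_of_real (x - c)) l"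
    using lagrange_dd_eq_slopes[of "{0..Suc m}" l "Suc m" F] inj by (simp add: c_def)
  also have "\<dots> = lagrange_dd {0..m} (\<lambda>x. integral {0..1} (\<lambda>t. F' ((1 - t) * x + t * c))) l"
    by (rule lagrange_dd_cong) (simp add: slope)
  also have "\<dots> = integral {0..1} (\<lambda>t. lagrange_dd {0..m} (\<lambda>x. F' ((1 - t) * x + t * c)) l)"
    using has_integral_segment_derivative[OF F node_ne] by (intro integral_lagrange_dd[symmetric]) auto
  finally show ?thesis
    unfolding c_def .
qed

lemma hermite_genocchi_eq_lagrange_dd:
  assumes "F \<in> Cn m" "inj_on l {0..m}"
  shows "hermite_genocchi m ((vderiv ^^ m) F) l = lagrange_dd {0..m} F l"
  using assms
proof (induction m arbitrary: F l)
  case 0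
  then show ?case by simp
next
  case (Suc m)
  define F' where "F' = vderiv F"
  define c where "c = l (Suc m)"
  have F': "F' \<in> Cn m"
    unfolding F'_def using Suc.prems(1) by (rule Cn_vderiv)
  have derivs: "(vderiv ^^ Suc m) F = (vderiv ^^ m) F'"
    unfolding F'_def by (simp only: funpow_Suc_right comp_apply)
  have inj: "inj_on l {0..m}"
    using Suc.prems(2) by (rule inj_on_subset) auto
  \<comment> \<open>Away from t = 1 the nodes (1 - t) l i + t c stay distinct, so the induction hypothesis applies.\<close>
  have pointwise: "(1 - t) ^ m *\<^sub>R hermite_genocchi m ((vderiv ^^ m) F') (\<lambda>i. (1 - t) * l i + t * c)
      = lagrange_dd {0..m} (\<lambda>x. F' ((1 - t) * x + t * c)) l" if "t \<noteq> 1" for t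
  proof -
    have "inj_on (\<lambda>i. (1 - t) * l i + t * c) {0..m}"
      using inj that by (auto simp: inj_on_def)
    with F' have "hermite_genocchi m ((vderiv ^^ m) F') (\<lambda>i. (1 - t) * l i + t * c)
        = lagrange_dd {0..m} F' (\<lambda>i. (1 - t) * l i + t * c)"
      by (rule Suc.IH)
    then show ?thesis
      using lagrange_dd_affine[of "{0..m}" "1 - t" F' l "t * c"] that by (simp add: scaleR_conv_of_real)
  qed
  have "hermite_genocchi (Suc m) ((vderiv ^^ Suc m) F) l
      = integral {0..1} (\<lambda>t. (1 - t) ^ m *\<^sub>R hermite_genocchi m ((vderiv ^^ m) F') (\<lambda>i. (1 - t) * l i + t * c))"
    unfolding derivs c_def by simp
  also have "\<dots> = integral {0..1} (\<lambda>t. lagrange_dd {0..m} (\<lambda>x. F' ((1 - t) * x + t * c)) l)"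
    by (rule integral_spike[of "{1}"]) (auto simp: pointwise)
  also have "\<dots> = lagrange_dd {0..Suc m} F l"
    unfolding c_def F'_def using Cn_has_vector_derivative[OF Suc.prems(1)] Suc.prems(2)
    by (rule lagrange_dd_Suc_eq_integral[symmetric])
  finally show ?case .
qed

lemma hermite_genocchi_recurrence:
  assumes F: "F \<in> Cn (Suc m)" and inj: "inj_on l {0..Suc m}"
  shows "hermite_genocchi (Suc m) ((vderiv ^^ Suc m) F) l * complex_of_real (l 0 - l (Suc m))
    = hermite_genocchi m ((vderiv ^^ m) F) l - hermite_genocchi m ((vderiv ^^ m) F) (\<lambda>j. l (Suc j))"
proof -
  have Fm: "F \<in> Cn m"
    using F by (rule Cn_mono) simp
  have "inj_on (\<lambda>j. l (Suc j)) {0..m}"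
  proof (rule inj_onI)
    fix x y assume "x \<in> {0..m}" "y \<in> {0..m}" "l (Suc x) = l (Suc y)"
    then show "x = y"
      using inj_onD[OF inj, of "Suc x" "Suc y"] by simp
  qed
  then have "hermite_genocchi m ((vderiv ^^ m) F) (\<lambda>j. l (Suc j)) = lagrange_dd {0..m} F (\<lambda>j. l (Suc j))"
    by (rule hermite_genocchi_eq_lagrange_dd[OF Fm])
  also have "\<dots> = lagrange_dd (Suc ` {0..m}) F l"
    by (rule lagrange_dd_reindex[symmetric]) simp
  finally have shifted: "hermite_genocchi m ((vderiv ^^ m) F) (\<lambda>j. l (Suc j)) = lagrange_dd (Suc ` {0..m}) F l" .
  have unshifted: "hermite_genocchi m ((vderiv ^^ m) F) l = lagrange_dd {0..m} F l"
    using inj by (intro hermite_genocchi_eq_lagrange_dd[OF Fm]) (auto intro: inj_on_subset)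
  have nodes: "{0..Suc m} - {Suc m} = {0..m}" "{0..Suc m} - {0} = Suc ` {0..m}"
    by (auto simp: image_Suc_atLeastAtMost)
  have "hermite_genocchi (Suc m) ((vderiv ^^ Suc m) F) l * complex_of_real (l 0 - l (Suc m))
      = lagrange_dd {0..Suc m} F l * complex_of_real (l 0 - l (Suc m))"
    by (simp only: hermite_genocchi_eq_lagrange_dd[OF F inj])
  also have "\<dots> = lagrange_dd ({0..Suc m} - {Suc m}) F l - lagrange_dd ({0..Suc m} - {0}) F l"
    using inj by (intro lagrange_dd_recurrence) auto
  finally show ?thesis
    by (simp only: nodes shifted unshifted)
qed

lemma eventually_inj_on_perturbation:
  assumes "finite A"
  shows "\<forall>\<^sub>F \<epsilon> in at (0::real). inj_on (\<lambda>i. l i + \<epsilon> * real i) A"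
proof -
  have "\<forall>\<^sub>F \<epsilon> in at (0::real). \<forall>p\<in>A \<times> A. \<epsilon> \<noteq> (l (snd p) - l (fst p)) / (real (fst p) - real (snd p))"
    using assms by (intro eventually_ball_finite) (auto intro: eventually_neq_at_within)
  then show ?thesis
  proof eventually_elim
    case (elim \<epsilon>)
    show ?case
    proof (rule inj_onI, rule ccontr)
      fix i j assume ij: "i \<in> A" "j \<in> A" "l i + \<epsilon> * real i = l j + \<epsilon> * real j" "i \<noteq> j"
      then have "\<epsilon> = (l j - l i) / (real i - real j)"
        by (simp add: field_simps)
      with elim ij(1,2) show False
        by fastforce
    qed
  qed
qed

lemma eq_on_open_if_eq_on_injective:
  fixes \<phi> \<psi> :: "(nat \<Rightarrow> real) \<Rightarrow> complex"
  assumes "open S" "continuous_on S \<phi>" "continuous_on S \<psi>" "l \<in> S"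
    and eq: "\<And>q. q \<in> S \<Longrightarrow> inj_on q {0..n} \<Longrightarrow> \<phi> q = \<psi> q"
  shows "\<phi> l = \<psi> l"
proof -
  define p where "p \<epsilon> = (\<lambda>i. l i + \<epsilon> * real i)" for \<epsilon> :: real
  have "continuous_on UNIV p"
    unfolding p_def by (intro continuous_intros)
  then have "isCont p 0"
    by (simp add: continuous_on_eq_continuous_at)
  then have p: "(p \<longlongrightarrow> l) (at 0)"
    by (simp add: isCont_def p_def)
  have "\<forall>\<^sub>F \<epsilon> in at 0. p \<epsilon> \<in> S"
    using topological_tendstoD[OF p \<open>open S\<close> \<open>l \<in> S\<close>] .
  moreover have "\<forall>\<^sub>F \<epsilon> in at 0. inj_on (p \<epsilon>) {0..n}"
    unfolding p_def by (rule eventually_inj_on_perturbation) simp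
  ultimately have ev: "\<forall>\<^sub>F \<epsilon> in at 0. \<phi> (p \<epsilon>) = \<psi> (p \<epsilon>)"
    by eventually_elim (rule eq)
  have cont: "isCont \<phi> l" "isCont \<psi> l"
    using assms(1-4) by (simp_all add: continuous_on_eq_continuous_at)
  have "((\<lambda>\<epsilon>. \<psi> (p \<epsilon>)) \<longlongrightarrow> \<phi> l) (at 0)"
    using isCont_tendsto_compose[OF cont(1) p] ev by (rule Lim_transform_eventually)
  moreover have "((\<lambda>\<epsilon>. \<psi> (p \<epsilon>)) \<longlongrightarrow> \<psi> l) (at 0)"
    using isCont_tendsto_compose[OF cont(2) p] .
  ultimately show ?thesis
    by (rule tendsto_unique[OF trivial_limit_at])
qed

lemma at_within_coordinates_neq_not_bot:
  assumes "i \<noteq> j"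
  shows "at l within {q :: nat \<Rightarrow> real. q i \<noteq> q j} \<noteq> bot"
proof
  assume bot: "at l within {q. q i \<noteq> q j} = bot"
  define c where "c \<epsilon> = l(i := l i + \<epsilon>)" for \<epsilon> :: real
  have "continuous_on UNIV c"
    unfolding c_def
  proof (intro continuous_on_coordinatewise_then_product)
    fix k
    show "continuous_on UNIV (\<lambda>\<epsilon>. (l(i := l i + \<epsilon>)) k)"
      by (cases "k = i") (auto intro!: continuous_intros)
  qed
  then have "isCont c 0"
    by (simp add: continuous_on_eq_continuous_at)
  then have "(c \<longlongrightarrow> l) (at 0)"
    by (simp add: isCont_def c_def)
  moreover have "\<forall>\<^sub>F \<epsilon> in at 0. c \<epsilon> \<in> {q. q i \<noteq> q j} \<and> c \<epsilon> \<noteq> l"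
    using eventually_conj[OF eventually_neq_at_within[of 0] eventually_neq_at_within[of "l j - l i"]]
  proof eventually_elim
    case (elim \<epsilon>)
    then have "c \<epsilon> i \<noteq> c \<epsilon> j" "c \<epsilon> i \<noteq> l i"
      using assms by (auto simp: c_def)
    then show ?case
      by auto
  qed
  ultimately have "filterlim c (at l within {q. q i \<noteq> q j}) (at 0)"
    by (simp add: filterlim_at)
  then show False
    by (simp add: bot filterlim_def bot_unique filtermap_bot_iff)
qed

lemma cext_eq_continuous:
  fixes H :: "'a::topological_space \<Rightarrow> complex"
  assumes "continuous_on UNIV H" "\<And>l. l \<in> S \<Longrightarrow> g l = H l"
    and "\<And>l. l \<notin> S \<Longrightarrow> at l within S \<noteq> bot"
  shows "cext S g = H"
proof
  fix l
  show "cext S g l = H l"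
  proof (cases "l \<in> S")
    case True
    then show ?thesis
      unfolding cext_def using assms(2) by simp
  next
    case False
    have "(H \<longlongrightarrow> H l) (at l within S)"
      using assms(1) unfolding continuous_on_def by (blast intro: tendsto_within_subset)
    moreover have "\<forall>\<^sub>F q in at l within S. H q = g q"
      using assms(2) by (simp add: eventually_at_filter)
    ultimately have "(g \<longlongrightarrow> H l) (at l within S)"
      by (rule Lim_transform_eventually)
    then have "Lim (at l within S) g = H l"
      using assms(3)[OF False] by (intro tendsto_Lim)
    with False show ?thesis
      unfolding cext_def by simp
  qed
qed

lemma divdiff_eq_hermite_genocchi:
  assumes "F \<in> Cn m"
  shows "divdiff m F = hermite_genocchi m ((vderiv ^^ m) F)"
  using assms
proof (induction m arbitrary: F)
  case 0
  then show ?case by (simp add: fun_eq_iff)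
next
  case (Suc m)
  define H where "H = hermite_genocchi (Suc m) ((vderiv ^^ Suc m) F)"
  define G where "G = hermite_genocchi m ((vderiv ^^ m) F)"
  define S where "S = {l :: nat \<Rightarrow> real. l 0 \<noteq> l (Suc m)}"
  define g where "g l = (G l - G (\<lambda>j. l (Suc j))) / complex_of_real (l 0 - l (Suc m))" for l
  have Fm: "F \<in> Cn m"
    using Suc.prems by (rule Cn_mono) simp
  have dd: "divdiff (Suc m) F = cext S g"
    unfolding S_def g_def G_def by (simp add: Suc.IH[OF Fm])
  have cont_G: "continuous_on UNIV G"
    unfolding G_def using Cn_continuous_deriv[OF Fm order_refl] by (rule continuous_on_hermite_genocchi)
  have cont_H: "continuous_on UNIV H"
    unfolding H_def using Cn_continuous_deriv[OF Suc.prems order_refl] by (rule continuous_on_hermite_genocchi)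
  have "open S"
    unfolding S_def by (intro open_Collect_neq continuous_on_product_coordinates)
  have coordinate: "continuous_on S (\<lambda>l. l k)" for k
    by (rule continuous_on_subset[OF continuous_on_product_coordinates]) simp
  have "continuous_on S g"
    unfolding g_def
    by (intro continuous_intros continuous_on_compose2[OF cont_G] coordinate) (auto simp: S_def)
  have on_S: "g l = H l" if "l \<in> S" for l
    using \<open>open S\<close> \<open>continuous_on S g\<close> continuous_on_subset[OF cont_H] that
  proof (rule eq_on_open_if_eq_on_injective)
    fix q assume "q \<in> S" "inj_on q {0..Suc m}"
    have "H q * complex_of_real (q 0 - q (Suc m)) = G q - G (\<lambda>j. q (Suc j))"
      unfolding H_def G_def using Suc.prems \<open>inj_on q {0..Suc m}\<close> by (rule hermite_genocchi_recurrence)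
    moreover have "q 0 \<noteq> q (Suc m)"
      using \<open>q \<in> S\<close> by (simp add: S_def)
    ultimately show "g q = H q"
      unfolding g_def by (simp add: divide_eq_eq)
  qed simp
  show ?case
    unfolding dd H_def[symmetric] S_def
    using cont_H on_S at_within_coordinates_neq_not_bot[OF Zero_not_Suc]
    by (rule cext_eq_continuous) (simp_all add: S_def)
qed

lemma continuous_on_divdiff:
  assumes "F \<in> Cn m"
  shows "continuous_on UNIV (divdiff m F)"
  unfolding divdiff_eq_hermite_genocchi[OF assms]
  using Cn_continuous_deriv[OF assms order_refl] by (rule continuous_on_hermite_genocchi)

section \<open>Fourier representations\<close>

definition fourier_integral ::
    "nat \<Rightarrow> 'a measure \<Rightarrow> ('a \<Rightarrow> complex) \<Rightarrow> (nat \<Rightarrow> 'a \<Rightarrow> real) \<Rightarrow> (nat \<Rightarrow> real) \<Rightarrow> complex" where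
  "fourier_integral n M b \<theta> l = (LINT w|M. b w * cis (\<Sum>j\<in>{0..n}. l j * \<theta> j w))"

text \<open>Unlike the tensor-product form of \<^const>\<open>BS\<close>, this form is stable under the affine change
  of nodes in the recursion for \<^const>\<open>hermite_genocchi\<close>.  The frequency space is fixed to
  \<^typ>\<open>nat \<Rightarrow> real\<close> only because HOL cannot quantify over types; representations on other
  measure spaces are transported into it along an injection.\<close>
definition fourier_form :: "nat \<Rightarrow> ((nat \<Rightarrow> real) \<Rightarrow> complex) \<Rightarrow> bool" where
  "fourier_form n \<phi> \<longleftrightarrow> (\<exists>(M :: (nat \<Rightarrow> real) measure) b \<theta>. prob_space M \<and>
     b \<in> borel_measurable M \<and> (\<exists>B. \<forall>w. norm (b w) \<le> B) \<and> (\<forall>j. \<theta> j \<in> borel_measurable M) \<and>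
     \<phi> = fourier_integral n M b \<theta>)"

lemma fourier_formE:
  assumes "fourier_form n \<phi>"
  obtains M :: "(nat \<Rightarrow> real) measure" and b \<theta> B where "prob_space M" "b \<in> borel_measurable M"
    "\<And>w. norm (b w) \<le> B" "\<And>j. \<theta> j \<in> borel_measurable M" "\<phi> = fourier_integral n M b \<theta>"
  using assms unfolding fourier_form_def by blast

lemma prod_cis: "(\<Prod>j\<in>A. cis (f j)) = cis (\<Sum>j\<in>A. f j)"
  by (induction A rule: infinite_finite_induct) (simp_all add: cis_mult)

lemma borel_measurable_cis [measurable]: "cis \<in> borel_measurable borel"
proof -
  have "cis = (\<lambda>x. exp (\<i> * complex_of_real x))"
    by (simp add: fun_eq_iff cis_conv_exp)
  then show ?thesis
    by (simp add: borel_measurable_continuous_onI continuous_intros)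
qed

lemma fourier_form_BS:
  assumes "fourier_form n \<phi>"
  shows "BS n \<phi>"
proof -
  obtain M :: "(nat \<Rightarrow> real) measure" and b \<theta> B where M: "prob_space M"
    and b[measurable]: "b \<in> borel_measurable M" and B: "\<And>w. norm (b w) \<le> B"
    and \<theta>[measurable]: "\<And>j. \<theta> j \<in> borel_measurable M" and \<phi>: "\<phi> = fourier_integral n M b \<theta>"
    using assms by (rule fourier_formE) blast
  define a where "a j x w = (if j = 0 then b w else 1) * cis (x * \<theta> j w)"
    for j :: nat and x :: real and w :: "nat \<Rightarrow> real"
  have prod_a: "(\<Prod>j\<in>{0..n}. a j (l j) w) = b w * cis (\<Sum>j\<in>{0..n}. l j * \<theta> j w)" for l w
    unfolding a_def prod.distrib prod_cis by (simp add: prod.delta)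
  show ?thesis
    unfolding BS_def
  proof (intro exI[of _ M] exI[of _ a] conjI allI impI)
    show "finite_measure M"
      using M by (rule prob_space.finite_measure)
    fix j
    show "(\<lambda>(x, w). a j x w) \<in> borel_measurable (borel \<Otimes>\<^sub>M M)"
      unfolding a_def by measurable
    show "\<exists>B. \<forall>x w. norm (a j x w) \<le> B"
      using B by (intro exI[of _ "max B 1"]) (auto simp: a_def norm_mult le_max_iff_disj)
  next
    fix l
    show "\<phi> l = (LINT w|M. (\<Prod>j\<in>{0..n}. a j (l j) w))"
      unfolding \<phi> fourier_integral_def prod_a ..
  qed
qed

lemma fourier_form_zero: "fourier_form n (\<lambda>l. 0)"
  unfolding fourier_form_def
proof (intro exI[of _ "count_space {\<lambda>_. 0}"] exI[of _ "\<lambda>_. 0"] exI[of _ "\<lambda>_ _. 0"] conjI allI)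
  show "prob_space (count_space {\<lambda>_::nat. 0::real})"
    by (rule prob_spaceI) simp
qed (auto simp: fourier_integral_def fun_eq_iff)

lemma integral_embed_measure:
  fixes g :: "'b \<Rightarrow> complex"
  assumes e: "inj e" and g: "g \<in> borel_measurable (embed_measure P e)"
  shows "(LINT w|embed_measure P e. g w) = (LINT x|P. g (e x))"
proof -
  have "(LINT w|embed_measure P e. g w) = (LINT w|distr P (embed_measure P e) e. g w)"
    using embed_measure_eq_distr[OF e] by (rule arg_cong)
  also have "\<dots> = (LINT x|P. g (e x))"
    using measurable_embed_measure2[OF e] g by (rule integral_distr)
  finally show ?thesis .
qed

lemma fourier_form_embed:
  fixes P :: "'a measure" and e :: "'a \<Rightarrow> nat \<Rightarrow> real"
  assumes e: "inj e" and P: "prob_space P" and b: "b \<in> borel_measurable P"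
    and B: "\<And>x. norm (b x) \<le> B" and \<theta>: "\<And>j. \<theta> j \<in> borel_measurable P"
  shows "fourier_form n (fourier_integral n P b \<theta>)"
proof -
  define M where "M = embed_measure P e"
  define b' where "b' = b \<circ> inv e"
  define \<theta>' where "\<theta>' j = \<theta> j \<circ> inv e" for j
  have inv_e: "inv e (e x) = x" for x
    using e by simp
  have "emeasure M (space M) = emeasure P (e -` space M \<inter> space P)"
    unfolding M_def by (rule emeasure_embed_measure[OF e]) simp
  also have "e -` space M \<inter> space P = space P"
    unfolding M_def space_embed_measure by auto
  finally have M: "prob_space M"
    using P by (intro prob_spaceI) (simp add: prob_space.emeasure_space_1)
  have b': "b' \<in> borel_measurable M" and \<theta>': "\<theta>' j \<in> borel_measurable M" for j
    unfolding M_def b'_def \<theta>'_def using b \<theta> by (auto intro!: measurable_embed_measure1 simp: o_def inv_e)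
  have "fourier_integral n M b' \<theta>' l = fourier_integral n P b \<theta> l" for l
  proof -
    have "fourier_integral n M b' \<theta>' l = (LINT x|P. b' (e x) * cis (\<Sum>j\<in>{0..n}. l j * \<theta>' j (e x)))"
      unfolding fourier_integral_def M_def
    proof (rule integral_embed_measure[OF e])
      note [measurable] = b' \<theta>'
      show "(\<lambda>w. b' w * cis (\<Sum>j\<in>{0..n}. l j * \<theta>' j w)) \<in> borel_measurable (embed_measure P e)"
        unfolding M_def[symmetric] by measurable
    qed
    then show ?thesis
      by (simp add: fourier_integral_def b'_def \<theta>'_def inv_e)
  qed
  then show ?thesis
    unfolding fourier_form_def using M b' \<theta>' B
    by (intro exI[of _ M] exI[of _ b'] exI[of _ \<theta>']) (auto simp: b'_def fun_eq_iff)
qed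

lemma fourier_integral_null:
  assumes "emeasure P (space P) = 0"
  shows "fourier_integral n P b \<theta> = (\<lambda>l. 0)"
proof -
  have "AE x in P. False"
    using assms by (intro AE_I'[of "space P"]) (auto simp: null_sets_def)
  then show ?thesis
    unfolding fourier_integral_def by (auto intro!: integral_eq_zero_AE)
qed

lemma prob_space_density_normalize:
  assumes "finite_measure P" "measure P (space P) \<noteq> 0"
  shows "prob_space (density P (\<lambda>_. ennreal (1 / measure P (space P))))" (is "prob_space ?Q")
proof (rule prob_spaceI)
  interpret P: finite_measure P by (rule assms(1))
  have "0 < measure P (space P)"
    using assms(2) by (simp add: zero_less_measure_iff)
  then show "emeasure ?Q (space ?Q) = 1"
    by (simp add: emeasure_density nn_integral_cmult_indicator P.emeasure_eq_measure flip: ennreal_mult)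
qed

lemma fourier_form_finite_measure:
  fixes P :: "'a measure" and e :: "'a \<Rightarrow> nat \<Rightarrow> real"
  assumes e: "inj e" and P: "finite_measure P" and b: "b \<in> borel_measurable P"
    and B: "\<And>x. norm (b x) \<le> B" and \<theta>: "\<And>j. \<theta> j \<in> borel_measurable P"
  shows "fourier_form n (fourier_integral n P b \<theta>)"
proof -
  interpret P: finite_measure P by (rule P)
  define c where "c = measure P (space P)"
  show ?thesis
  proof (cases "c = 0")
    case True
    then have "emeasure P (space P) = 0"
      by (simp add: c_def P.emeasure_eq_measure)
    then show ?thesis
      by (simp add: fourier_integral_null fourier_form_zero)
  next
    case False
    then have c: "c > 0"
      unfolding c_def by (simp add: zero_less_measure_iff)
    define Q where "Q = density P (\<lambda>_. ennreal (1 / c))"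
    have sets_Q [measurable_cong]: "sets Q = sets P"
      unfolding Q_def by simp
    have Q: "prob_space Q"
      unfolding Q_def c_def using P False[unfolded c_def] by (rule prob_space_density_normalize)
    have "fourier_integral n Q (\<lambda>x. c * b x) \<theta> = fourier_integral n P b \<theta>"
    proof
      fix l
      note [measurable] = b \<theta>
      have "fourier_integral n Q (\<lambda>x. c * b x) \<theta> l
          = (LINT x|P. (1 / c) *\<^sub>R (c * b x * cis (\<Sum>j\<in>{0..n}. l j * \<theta> j x)))"
        unfolding fourier_integral_def Q_def
      proof (rule integral_density)
        show "(\<lambda>x. c * b x * cis (\<Sum>j\<in>{0..n}. l j * \<theta> j x)) \<in> borel_measurable P"
          by measurable
      qed (use c in auto)
      moreover have "(1 / c) *\<^sub>R (c * z) = z" for z :: complex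
        using c by (simp add: scaleR_conv_of_real)
      ultimately show "fourier_integral n Q (\<lambda>x. c * b x) \<theta> l = fourier_integral n P b \<theta> l"
        by (simp only: fourier_integral_def mult.assoc)
    qed
    moreover have "fourier_form n (fourier_integral n Q (\<lambda>x. c * b x) \<theta>)"
      using e Q
    proof (rule fourier_form_embed)
      show "(\<lambda>x. c * b x) \<in> borel_measurable Q" "\<theta> j \<in> borel_measurable Q" for j
        using b \<theta> by (simp_all add: measurable_cong_sets[OF sets_Q refl])
      show "norm (c * b x) \<le> c * B" for x
        using B c by (simp add: norm_mult mult_left_mono)
    qed
    ultimately show ?thesis
      by simp
  qed
qed

lemma fourier_form_scale:
  assumes "fourier_form n \<phi>"
  shows "fourier_form n (\<lambda>l. c * \<phi> l)"
proof -
  obtain M :: "(nat \<Rightarrow> real) measure" and b \<theta> B where M: "prob_space M" "b \<in> borel_measurable M"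
    "\<And>w. norm (b w) \<le> B" "\<And>j. \<theta> j \<in> borel_measurable M" and \<phi>: "\<phi> = fourier_integral n M b \<theta>"
    using assms by (rule fourier_formE) blast
  have "(\<lambda>l. c * \<phi> l) = fourier_integral n M (\<lambda>w. c * b w) \<theta>"
    unfolding \<phi> fourier_integral_def by (simp add: mult.assoc)
  moreover have "norm (c * b w) \<le> norm c * B" for w
    using M(3) by (simp add: norm_mult mult_left_mono)
  ultimately show ?thesis
    unfolding fourier_form_def using M by (intro exI[of _ M] exI[of _ "\<lambda>w. c * b w"] exI[of _ \<theta>]) auto
qed

definition encode_triple :: "bool \<times> (nat \<Rightarrow> real) \<times> (nat \<Rightarrow> real) \<Rightarrow> nat \<Rightarrow> real" where
  "encode_triple = (\<lambda>(c, v, w). case_nat (if c then 1 else 0) (\<lambda>k. if even k then v (k div 2) else w (k div 2)))"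

lemma inj_encode_triple: "inj encode_triple"
proof (rule injI)
  fix x y assume eq: "encode_triple x = encode_triple y"
  obtain c v w c' v' w' where xy: "x = (c, v, w)" "y = (c', v', w')"
    by (cases x, cases y) auto
  have "(if c then 1 else 0 :: real) = (if c' then 1 else 0)"
    using fun_cong[OF eq, of 0] by (simp add: xy encode_triple_def)
  moreover have "v k = v' k" for k
    using fun_cong[OF eq, of "Suc (2 * k)"] by (simp add: xy encode_triple_def)
  moreover have "w k = w' k" for k
    using fun_cong[OF eq, of "Suc (Suc (2 * k))"] by (simp add: xy encode_triple_def)
  ultimately show "x = y"
    by (auto simp: xy split: if_splits)
qed

lemma integral_choice:
  fixes E1 :: "'a \<Rightarrow> complex" and E2 :: "'b \<Rightarrow> complex"
  assumes M1: "prob_space M1" and M2: "prob_space M2"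
    and [measurable]: "E1 \<in> borel_measurable M1" "E2 \<in> borel_measurable M2"
    and B: "\<And>v. norm (E1 v) \<le> B" "\<And>w. norm (E2 w) \<le> B"
  shows "(LINT x|(count_space (UNIV :: bool set) \<Otimes>\<^sub>M (M1 \<Otimes>\<^sub>M M2)). (case x of (c, v, w) \<Rightarrow> if c then E1 v else E2 w))
    = (LINT v|M1. E1 v) + (LINT w|M2. E2 w)"
proof -
  interpret M12: pair_prob_space M1 M2
    by (intro pair_prob_space.intro pair_sigma_finite.intro M1 M2 prob_space_imp_sigma_finite)
  interpret C: pair_sigma_finite "count_space (UNIV :: bool set)" "M1 \<Otimes>\<^sub>M M2"
    by (intro pair_sigma_finite.intro prob_space_imp_sigma_finite M12.prob_space_axioms
        sigma_finite_measure_count_space_finite) simp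
  have "integrable (M1 \<Otimes>\<^sub>M M2) (\<lambda>(v, w). E1 v)" "integrable (M1 \<Otimes>\<^sub>M M2) (\<lambda>(v, w). E2 w)"
    using B by (auto intro!: M12.integrable_const_bound[where B=B] AE_I2 split: prod.split)
  from this[THEN M12.integral_fst] this[THEN M12.integral_snd]
  have integrals: "(LINT (v, w)|(M1 \<Otimes>\<^sub>M M2). E1 v) = (LINT v|M1. E1 v)"
    "(LINT (v, w)|(M1 \<Otimes>\<^sub>M M2). E2 w) = (LINT w|M2. E2 w)"
    by (simp_all add: M12.M1.prob_space M12.M2.prob_space)
  have "finite_measure (count_space (UNIV :: bool set) \<Otimes>\<^sub>M (M1 \<Otimes>\<^sub>M M2))"
    by (intro finite_measure_pair_measure finite_measure_count_space
        prob_space.finite_measure M1 M2) simp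
  then have "integrable (count_space (UNIV :: bool set) \<Otimes>\<^sub>M (M1 \<Otimes>\<^sub>M M2)) (\<lambda>(c, v, w). if c then E1 v else E2 w)"
    using B by (intro finite_measure.integrable_const_bound[where B=B] AE_I2) (auto split: prod.split)
  then have "(LINT x|(count_space (UNIV :: bool set) \<Otimes>\<^sub>M (M1 \<Otimes>\<^sub>M M2)). (case x of (c, v, w) \<Rightarrow> if c then E1 v else E2 w))
      = (LINT c|count_space UNIV. LINT y|(M1 \<Otimes>\<^sub>M M2). (\<lambda>(c, v, w). if c then E1 v else E2 w) (c, y))"
    by (rule C.integral_fst'[symmetric])
  also have "\<dots> = (LINT (v, w)|(M1 \<Otimes>\<^sub>M M2). E1 v) + (LINT (v, w)|(M1 \<Otimes>\<^sub>M M2). E2 w)"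
    by (simp add: lebesgue_integral_count_space_finite UNIV_bool add.commute)
  finally show ?thesis
    unfolding integrals .
qed

lemma fourier_form_add:
  assumes "fourier_form n \<phi>" "fourier_form n \<psi>"
  shows "fourier_form n (\<lambda>l. \<phi> l + \<psi> l)"
proof -
  obtain M1 :: "(nat \<Rightarrow> real) measure" and b1 \<theta>1 B1 where M1: "prob_space M1"
    and [measurable]: "b1 \<in> borel_measurable M1" "\<And>j. \<theta>1 j \<in> borel_measurable M1"
    and B1: "\<And>w. norm (b1 w) \<le> B1" and \<phi>: "\<phi> = fourier_integral n M1 b1 \<theta>1"
    using assms(1) by (rule fourier_formE) blast
  obtain M2 :: "(nat \<Rightarrow> real) measure" and b2 \<theta>2 B2 where M2: "prob_space M2"
    and [measurable]: "b2 \<in> borel_measurable M2" "\<And>j. \<theta>2 j \<in> borel_measurable M2"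
    and B2: "\<And>w. norm (b2 w) \<le> B2" and \<psi>: "\<psi> = fourier_integral n M2 b2 \<theta>2"
    using assms(2) by (rule fourier_formE) blast
  \<comment> \<open>The boolean coordinate selects which of the two representations is used.\<close>
  define P where "P = count_space (UNIV :: bool set) \<Otimes>\<^sub>M (M1 \<Otimes>\<^sub>M M2)"
  define b where "b = (\<lambda>(c, v, w). if c then b1 v else b2 w)"
  define \<theta> where "\<theta> j = (\<lambda>(c, v, w). if c then \<theta>1 j v else \<theta>2 j w)" for j
  have "finite_measure P"
    unfolding P_def by (intro finite_measure_pair_measure finite_measure_count_space
        prob_space.finite_measure M1 M2) simp
  then have "fourier_form n (fourier_integral n P b \<theta>)"
  proof (rule fourier_form_finite_measure[OF inj_encode_triple])
    show "b \<in> borel_measurable P" "\<theta> j \<in> borel_measurable P" for j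
      unfolding P_def b_def \<theta>_def by measurable
    show "norm (b x) \<le> max B1 B2" for x
      using B1 B2 by (auto simp: b_def le_max_iff_disj split: prod.split)
  qed
  moreover have "fourier_integral n P b \<theta> = (\<lambda>l. \<phi> l + \<psi> l)"
  proof
    fix l
    have "fourier_integral n P b \<theta> l = (LINT x|P. (case x of (c, v, w) \<Rightarrow>
        if c then b1 v * cis (\<Sum>j\<in>{0..n}. l j * \<theta>1 j v) else b2 w * cis (\<Sum>j\<in>{0..n}. l j * \<theta>2 j w)))"
      unfolding fourier_integral_def by (rule Bochner_Integration.integral_cong) (auto simp: b_def \<theta>_def)
    also have "\<dots> = \<phi> l + \<psi> l"
      unfolding P_def \<phi> \<psi> fourier_integral_def using B1 B2
      by (intro integral_choice[OF M1 M2, where B="max B1 B2"]) (auto simp: norm_mult le_max_iff_disj)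
    finally show "fourier_integral n P b \<theta> l = \<phi> l + \<psi> l" .
  qed
  ultimately show ?thesis
    by simp
qed

lemma fourier_form_sum:
  assumes "finite S" "\<And>T. T \<in> S \<Longrightarrow> fourier_form n (f T)"
  shows "fourier_form n (\<lambda>l. \<Sum>T\<in>S. f T l)"
  using assms by (induction S rule: finite_induct) (simp_all add: fourier_form_zero fourier_form_add)

lemma fourier_form_reindex:
  assumes "fourier_form m \<psi>" "inj_on \<sigma> {0..m}" "\<sigma> ` {0..m} \<subseteq> {0..n}"
  shows "fourier_form n (\<lambda>l. \<psi> (\<lambda>i. l (\<sigma> i)))"
proof -
  obtain M :: "(nat \<Rightarrow> real) measure" and b \<theta> B where M: "prob_space M" "b \<in> borel_measurable M"
    "\<And>w. norm (b w) \<le> B" "\<And>j. \<theta> j \<in> borel_measurable M" and \<psi>: "\<psi> = fourier_integral m M b \<theta>"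
    using assms(1) by (rule fourier_formE) blast
  define \<tau> where "\<tau> = the_inv_into {0..m} \<sigma>"
  define \<theta>' where "\<theta>' j w = (if j \<in> \<sigma> ` {0..m} then \<theta> (\<tau> j) w else 0)" for j w
  have "(\<Sum>j\<in>{0..n}. l j * \<theta>' j w) = (\<Sum>i\<in>{0..m}. l (\<sigma> i) * \<theta> i w)" for l w
  proof -
    have "(\<Sum>j\<in>{0..n}. l j * \<theta>' j w) = (\<Sum>j\<in>{0..n}. if j \<in> \<sigma> ` {0..m} then l j * \<theta> (\<tau> j) w else 0)"
      by (rule sum.cong) (auto simp: \<theta>'_def)
    also have "\<dots> = (\<Sum>j\<in>\<sigma> ` {0..m}. l j * \<theta> (\<tau> j) w)"
      using assms(3) by (simp add: sum.inter_restrict[symmetric] Int_absorb1)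
    also have "\<dots> = (\<Sum>i\<in>{0..m}. l (\<sigma> i) * \<theta> i w)"
      using assms(2) by (simp add: sum.reindex \<tau>_def the_inv_into_f_f)
    finally show ?thesis .
  qed
  then have "(\<lambda>l. \<psi> (\<lambda>i. l (\<sigma> i))) = fourier_integral n M b \<theta>'"
    by (simp add: \<psi> fourier_integral_def fun_eq_iff)
  moreover have "\<theta>' j \<in> borel_measurable M" for j
    unfolding \<theta>'_def using M(4) by simp
  ultimately show ?thesis
    unfolding fourier_form_def using M by (intro exI[of _ M] exI[of _ b] exI[of _ \<theta>']) auto
qed

lemma finite_measure_density_norm:
  fixes h :: "'a \<Rightarrow> 'b::{banach, second_countable_topology}"
  assumes "integrable M h"
  shows "finite_measure (density M (\<lambda>y. ennreal (norm (h y))))" (is "finite_measure ?P")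
proof (rule finite_measureI)
  have "emeasure ?P (space M)
      = (\<integral>\<^sup>+ y. ennreal (norm (h y)) * indicator (space M) y \<partial>M)"
    using assms by (simp add: emeasure_density)
  also have "\<dots> = (\<integral>\<^sup>+ y. ennreal (norm (h y)) \<partial>M)"
    by (rule nn_integral_cong) simp
  also have "\<dots> \<noteq> \<infinity>"
    using integrableD(2)[OF integrable_norm[OF assms]] by simp
  finally show "emeasure ?P (space ?P) \<noteq> \<infinity>"
    by simp
qed

lemma fourier_form_W0:
  assumes "G \<in> W0"
  shows "fourier_form 0 (\<lambda>l. G (l 0))"
proof -
  obtain M0 :: "real measure" and h where M0: "finite_measure M0" "sets M0 = sets borel"
    and h: "integrable M0 h" and G: "\<And>x. G x = (LINT y|M0. exp (\<i> * complex_of_real (x * y)) * h y)"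
    using assms unfolding W0_def by blast
  have [measurable]: "h \<in> borel_measurable M0"
    using h by auto
  have [measurable]: "(\<lambda>y. y) \<in> borel_measurable M0"
    unfolding measurable_cong_sets[OF M0(2) refl] by simp
  \<comment> \<open>The complex measure h dM0 is |h| dM0 with the bounded density sgn h.\<close>
  define P where "P = density M0 (\<lambda>y. ennreal (norm (h y)))"
  have sets_P: "sets P = sets M0"
    unfolding P_def by simp
  have P: "finite_measure P"
    unfolding P_def using h by (rule finite_measure_density_norm)
  have "fourier_integral 0 P (\<lambda>y. sgn (h y)) (\<lambda>j y. y) = (\<lambda>l. G (l 0))"
  proof
    fix l
    have "fourier_integral 0 P (\<lambda>y. sgn (h y)) (\<lambda>j y. y) l
        = (LINT y|M0. norm (h y) *\<^sub>R (sgn (h y) * cis (l 0 * y)))"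
      unfolding fourier_integral_def P_def by (subst integral_density) (simp_all, measurable)
    also have "\<dots> = (LINT y|M0. exp (\<i> * complex_of_real (l 0 * y)) * h y)"
    proof (rule Bochner_Integration.integral_cong[OF refl])
      fix y
      have "norm z *\<^sub>R (sgn z * c) = c * z" for z c :: complex
        by (cases "z = 0") (simp_all add: sgn_div_norm scaleR_conv_of_real field_simps)
      then show "norm (h y) *\<^sub>R (sgn (h y) * cis (l 0 * y)) = exp (\<i> * complex_of_real (l 0 * y)) * h y"
        by (simp add: cis_conv_exp)
    qed
    finally show "fourier_integral 0 P (\<lambda>y. sgn (h y)) (\<lambda>j y. y) l = G (l 0)"
      by (simp add: G)
  qed
  moreover have "fourier_form 0 (fourier_integral 0 P (\<lambda>y. sgn (h y)) (\<lambda>j y. y))"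
  proof (rule fourier_form_finite_measure[OF _ P])
    show "inj (\<lambda>(y::real) (_::nat). y)"
      by (rule injI) (metis)
    show "(\<lambda>y. sgn (h y)) \<in> borel_measurable P" "(\<lambda>y. y) \<in> borel_measurable P"
      by (simp_all add: measurable_cong_sets[OF sets_P refl])
    show "norm (sgn (h y)) \<le> 1" for y
      by (simp add: norm_sgn)
  qed
  ultimately show ?thesis
    by simp
qed

lemma inj_case_nat: "inj (\<lambda>(t, w). case_nat t w :: nat \<Rightarrow> 'a)"
proof (rule injI)
  fix x y :: "'a \<times> (nat \<Rightarrow> 'a)"
  assume eq: "(\<lambda>(t, w). case_nat t w) x = (\<lambda>(t, w). case_nat t w) y"
  obtain t w t' w' where xy: "x = (t, w)" "y = (t', w')"
    by (cases x, cases y) auto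
  have "t = t'"
    using fun_cong[OF eq, of 0] by (simp add: xy)
  moreover have "w k = w' k" for k
    using fun_cong[OF eq, of "Suc k"] by (simp add: xy)
  ultimately show "x = y"
    by (auto simp: xy)
qed

text \<open>The weight (1 - t)^m is cut off outside [0, 1] to keep the density bounded.\<close>
definition segment_density :: "nat \<Rightarrow> ('a \<Rightarrow> complex) \<Rightarrow> real \<times> 'a \<Rightarrow> complex" where
  "segment_density m b = (\<lambda>(t, v). complex_of_real (if t \<in> {0..1} then (1 - t) ^ m else 0) * b v)"

definition segment_frequency :: "nat \<Rightarrow> (nat \<Rightarrow> 'a \<Rightarrow> real) \<Rightarrow> nat \<Rightarrow> real \<times> 'a \<Rightarrow> real" where
  "segment_frequency m \<theta> j = (\<lambda>(t, v). if j \<le> m then (1 - t) * \<theta> j v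
     else if j = Suc m then t * (\<Sum>i\<in>{0..m}. \<theta> i v) else 0)"

lemma sum_segment_frequency:
  "(\<Sum>j\<in>{0..Suc m}. l j * segment_frequency m \<theta> j (t, v))
    = (\<Sum>j\<in>{0..m}. ((1 - t) * l j + t * l (Suc m)) * \<theta> j v)"
proof -
  have "(\<Sum>j\<in>{0..Suc m}. l j * segment_frequency m \<theta> j (t, v))
      = (\<Sum>j\<in>{0..m}. l j * ((1 - t) * \<theta> j v)) + l (Suc m) * (t * (\<Sum>i\<in>{0..m}. \<theta> i v))"
    by (simp add: segment_frequency_def)
  also have "\<dots> = (\<Sum>j\<in>{0..m}. l j * ((1 - t) * \<theta> j v) + l (Suc m) * (t * \<theta> j v))"
    by (simp add: sum.distrib sum_distrib_left)
  also have "\<dots> = (\<Sum>j\<in>{0..m}. ((1 - t) * l j + t * l (Suc m)) * \<theta> j v)"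
    by (rule sum.cong) (simp_all add: algebra_simps)
  finally show ?thesis .
qed

lemma norm_segment_density_le:
  assumes "\<And>v. norm (b v) \<le> B"
  shows "norm (segment_density m b x) \<le> B"
proof -
  obtain t v where x: "x = (t, v)"
    by (cases x)
  have "0 \<le> B"
    using assms[of v] norm_ge_zero order_trans by blast
  show ?thesis
  proof (cases "t \<in> {0..1}")
    case True
    then have "norm (segment_density m b x) = \<bar>(1 - t) ^ m\<bar> * norm (b v)"
      by (simp only: x segment_density_def case_prod_conv norm_mult norm_of_real if_True)
    also have "\<dots> = (1 - t) ^ m * norm (b v)"
      using True by simp
    also have "\<dots> \<le> norm (b v)"
      using True by (intro mult_left_le_one_le power_le_one) auto
    finally show ?thesis
      using assms[of v] by simp
  qed (auto simp: x segment_density_def \<open>0 \<le> B\<close>)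
qed

lemma measurable_segment:
  assumes "b \<in> borel_measurable M" "\<And>j. \<theta> j \<in> borel_measurable M"
  shows "segment_density m b \<in> borel_measurable (restrict_space lborel {0..1} \<Otimes>\<^sub>M M)"
    and "segment_frequency m \<theta> j \<in> borel_measurable (restrict_space lborel {0..1} \<Otimes>\<^sub>M M)"
proof -
  note [measurable] = assms
  have [measurable]: "f \<in> borel_measurable (restrict_space lborel {0..1::real})"
    if "f \<in> borel_measurable borel" for f :: "real \<Rightarrow> real"
    using that by (intro measurable_restrict_space1) simp
  show "segment_density m b \<in> borel_measurable (restrict_space lborel {0..1} \<Otimes>\<^sub>M M)"
    unfolding segment_density_def by measurable
  show "segment_frequency m \<theta> j \<in> borel_measurable (restrict_space lborel {0..1} \<Otimes>\<^sub>M M)"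
    unfolding segment_frequency_def by (cases "j \<le> m"; cases "j = Suc m") (simp_all, measurable)
qed

lemma fourier_integral_segment:
  assumes M: "prob_space M" and b: "b \<in> borel_measurable M" "\<And>v. norm (b v) \<le> B"
    and \<theta>: "\<And>j. \<theta> j \<in> borel_measurable M"
  shows "fourier_integral (Suc m) (restrict_space lborel {0..1} \<Otimes>\<^sub>M M) (segment_density m b)
      (segment_frequency m \<theta>) l
    = (LBINT t:{0..1}. (1 - t) ^ m *\<^sub>R fourier_integral m M b \<theta> (\<lambda>i. (1 - t) * l i + t * l (Suc m)))"
proof -
  define U where "U = restrict_space lborel {0..1::real}"
  interpret UM: pair_prob_space U M
    unfolding U_def by (intro pair_prob_space.intro pair_sigma_finite.intro prob_space_imp_sigma_finite
        prob_space_restrict_space M) auto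
  note [measurable] = measurable_segment[OF b(1) \<theta>, folded U_def]
  define F where "F x = segment_density m b x * cis (\<Sum>j\<in>{0..Suc m}. l j * segment_frequency m \<theta> j x)" for x
  have "integrable (U \<Otimes>\<^sub>M M) F"
    using norm_segment_density_le[OF b(2)] unfolding F_def
    by (intro UM.integrable_const_bound[where B=B] AE_I2) (simp_all add: norm_mult, measurable)
  then have "fourier_integral (Suc m) (U \<Otimes>\<^sub>M M) (segment_density m b) (segment_frequency m \<theta>) l
      = (LINT t|U. LINT v|M. F (t, v))"
    unfolding fourier_integral_def F_def by (rule UM.integral_fst'[symmetric])
  also have "\<dots> = (LINT t|U. (1 - t) ^ m *\<^sub>R fourier_integral m M b \<theta> (\<lambda>i. (1 - t) * l i + t * l (Suc m)))"
  proof (rule Bochner_Integration.integral_cong[OF refl])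
    fix t assume "t \<in> space U"
    then have "t \<in> {0..1}"
      by (simp add: U_def)
    then have "(\<lambda>v. F (t, v)) = (\<lambda>v. complex_of_real ((1 - t) ^ m)
        * (b v * cis (\<Sum>j\<in>{0..m}. ((1 - t) * l j + t * l (Suc m)) * \<theta> j v)))"
      unfolding F_def segment_density_def case_prod_conv sum_segment_frequency by (simp add: mult.assoc)
    then show "(LINT v|M. F (t, v))
        = (1 - t) ^ m *\<^sub>R fourier_integral m M b \<theta> (\<lambda>i. (1 - t) * l i + t * l (Suc m))"
      by (simp add: fourier_integral_def scaleR_conv_of_real)
  qed
  also have "\<dots> = (LBINT t:{0..1}. (1 - t) ^ m *\<^sub>R fourier_integral m M b \<theta> (\<lambda>i. (1 - t) * l i + t * l (Suc m)))"
    unfolding U_def set_lebesgue_integral_def by (rule integral_restrict_space) simp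
  finally show ?thesis
    unfolding U_def .
qed

lemma fourier_form_hermite_genocchi_Suc:
  assumes G: "continuous_on UNIV G" and IH: "fourier_form m (hermite_genocchi m G)"
  shows "fourier_form (Suc m) (hermite_genocchi (Suc m) G)"
proof -
  obtain M :: "(nat \<Rightarrow> real) measure" and b \<theta> B where M: "prob_space M"
    and b: "b \<in> borel_measurable M" "\<And>w. norm (b w) \<le> B"
    and \<theta>: "\<And>j. \<theta> j \<in> borel_measurable M" and HG: "hermite_genocchi m G = fourier_integral m M b \<theta>"
    using IH by (rule fourier_formE) blast
  have "finite_measure (restrict_space lborel {0..1::real} \<Otimes>\<^sub>M M)"
    by (intro finite_measure_pair_measure prob_space.finite_measure prob_space_restrict_space M) auto
  then have "fourier_form (Suc m) (fourier_integral (Suc m) (restrict_space lborel {0..1} \<Otimes>\<^sub>M M)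
      (segment_density m b) (segment_frequency m \<theta>))"
    using measurable_segment[OF b(1) \<theta>] norm_segment_density_le[OF b(2)]
    by (intro fourier_form_finite_measure[OF inj_case_nat])
  moreover have "fourier_integral (Suc m) (restrict_space lborel {0..1} \<Otimes>\<^sub>M M)
      (segment_density m b) (segment_frequency m \<theta>) = hermite_genocchi (Suc m) G"
  proof
    fix l :: "nat \<Rightarrow> real"
    define \<mu> where "\<mu> t = (\<lambda>i. (1 - t) * l i + t * l (Suc m))" for t
    have "continuous_on UNIV \<mu>"
      unfolding \<mu>_def by (intro continuous_intros)
    then have "continuous_on {0..1} (\<lambda>t. hermite_genocchi m G (\<mu> t))"
      by (intro continuous_on_compose2[OF continuous_on_hermite_genocchi[OF G]]) (auto intro: continuous_on_subset)
    then have "set_integrable lborel {0..1} (\<lambda>t. (1 - t) ^ m *\<^sub>R hermite_genocchi m G (\<mu> t))"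
      by (intro borel_integrable_atLeastAtMost' continuous_intros)
    then show "fourier_integral (Suc m) (restrict_space lborel {0..1} \<Otimes>\<^sub>M M)
        (segment_density m b) (segment_frequency m \<theta>) l = hermite_genocchi (Suc m) G l"
      by (simp add: fourier_integral_segment[OF M b \<theta>] set_borel_integral_eq_integral(2) HG[symmetric] \<mu>_def)
  qed
  ultimately show ?thesis
    by simp
qed

lemma fourier_form_hermite_genocchi:
  assumes "G \<in> W0"
  shows "fourier_form m (hermite_genocchi m G)"
proof (induction m)
  case 0
  have "hermite_genocchi 0 G = (\<lambda>l. G (l 0))"
    by (rule ext) simp
  then show ?case
    using fourier_form_W0[OF assms] by simp
next
  case (Suc m)
  moreover have "continuous_on UNIV G"
    using assms by (simp add: W0_def)
  ultimately show ?case
    by (intro fourier_form_hermite_genocchi_Suc)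
qed

section \<open>Divided differences times u^\<alpha>\<close>

lemma fourier_form_lagrange_dd_extension:
  assumes A: "A \<subseteq> {0..n}" "card A = Suc m" and F: "F \<in> Cn m" "(vderiv ^^ m) F \<in> W0"
  obtains \<phi> where "fourier_form n \<phi>" "continuous_on UNIV \<phi>"
    "\<And>q :: nat \<Rightarrow> real. inj_on q A \<Longrightarrow> \<phi> q = lagrange_dd A F q"
proof -
  have "finite A"
    using A(1) finite_subset by blast
  then obtain \<sigma> where "bij_betw \<sigma> {0..<card A} A"
    using ex_bij_betw_nat_finite by blast
  then have \<sigma>: "bij_betw \<sigma> {0..m} A"
    using A(2) by (simp add: atLeastLessThanSuc_atLeastAtMost)
  then have inj_\<sigma>: "inj_on \<sigma> {0..m}" and image_\<sigma>: "\<sigma> ` {0..m} = A"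
    by (auto simp: bij_betw_def)
  have cont_G: "continuous_on UNIV ((vderiv ^^ m) F)"
    using F(2) by (simp add: W0_def)
  define \<phi> where "\<phi> q = hermite_genocchi m ((vderiv ^^ m) F) (\<lambda>i. q (\<sigma> i))" for q
  show ?thesis
  proof (rule that)
    show "fourier_form n \<phi>"
      unfolding \<phi>_def using fourier_form_hermite_genocchi[OF F(2)] inj_\<sigma>
      by (rule fourier_form_reindex) (use A(1) image_\<sigma> in simp)
    show "continuous_on UNIV \<phi>"
      unfolding \<phi>_def
      by (intro continuous_on_compose2[OF continuous_on_hermite_genocchi[OF cont_G]] continuous_intros) auto
  next
    fix q :: "nat \<Rightarrow> real"
    assume "inj_on q A"
    then have "inj_on (\<lambda>i. q (\<sigma> i)) {0..m}"
      using \<open>inj_on q A\<close> inj_\<sigma> image_\<sigma> by (auto simp: inj_on_def)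
    then have "\<phi> q = lagrange_dd {0..m} F (\<lambda>i. q (\<sigma> i))"
      unfolding \<phi>_def using F(1) by (intro hermite_genocchi_eq_lagrange_dd)
    also have "\<dots> = lagrange_dd A F q"
      using lagrange_dd_reindex[OF inj_\<sigma>] image_\<sigma> by simp
    finally show "\<phi> q = lagrange_dd A F q" .
  qed
qed

lemma u_multi_0_1:
  assumes "\<forall>j\<in>{1..n}. \<alpha> j \<in> {0, 1}"
  shows "u_multi n \<alpha> l = (\<Prod>j\<in>{j\<in>{1..n}. \<alpha> j = 1}. complex_of_real (l j) - \<i>)"
proof -
  have "u_multi n \<alpha> l = (\<Prod>j\<in>{1..n}. if \<alpha> j = 1 then complex_of_real (l j) - \<i> else 1)"
    unfolding u_multi_def
  proof (rule prod.cong[OF refl])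
    fix j assume "j \<in> {1..n}"
    then have "\<alpha> j = 0 \<or> \<alpha> j = 1"
      using assms by auto
    then show "(complex_of_real (l j) - \<i>) ^ \<alpha> j = (if \<alpha> j = 1 then complex_of_real (l j) - \<i> else 1)"
      by auto
  qed
  also have "\<dots> = (\<Prod>j\<in>{j\<in>{1..n}. \<alpha> j = 1}. complex_of_real (l j) - \<i>)"
    by (rule prod.inter_filter[symmetric]) simp
  finally show ?thesis .
qed

lemma sum_0_1_eq_card:
  assumes "finite A" "\<forall>j\<in>A. \<alpha> j \<in> {0, 1}"
  shows "(\<Sum>j\<in>A. \<alpha> j) = card {j\<in>A. \<alpha> j = 1}"
proof -
  have "(\<Sum>j\<in>A. \<alpha> j) = (\<Sum>j\<in>A. if \<alpha> j = 1 then 1 else 0)"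
    using assms(2) by (intro sum.cong) auto
  then show ?thesis
    using assms(1) by (simp add: sum.inter_filter[symmetric])
qed

lemma fourier_form_lagrange_dd_Wnk:
  assumes f: "f \<in> Wnk n (card J)" and J: "J \<subseteq> {1..n}" and T: "T \<subseteq> J"
  obtains \<phi> where "fourier_form n \<phi>" "continuous_on UNIV \<phi>"
    "\<And>q :: nat \<Rightarrow> real. inj_on q ({0..n} - (J - T))
      \<Longrightarrow> \<phi> q = lagrange_dd ({0..n} - (J - T)) (\<lambda>x. f x * u_pow (card T) x) q"
proof -
  have "finite J"
    using J finite_subset by blast
  then have "card T \<le> card J"
    using T by (rule card_mono)
  moreover have "card J \<le> n"
    using card_mono[OF _ J] by simp
  moreover have "card ({0..n} - (J - T)) = Suc n - card (J - T)"
    using J T by (subst card_Diff_subset) (auto intro: finite_subset)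
  moreover have "card (J - T) = card J - card T"
    using T \<open>finite J\<close> by (subst card_Diff_subset) (auto intro: finite_subset)
  ultimately have "card ({0..n} - (J - T)) = Suc (n - card J + card T)"
    by simp
  moreover have "(\<lambda>x. f x * u_pow (card T) x) \<in> Cn (n - card J + card T)"
    using f \<open>card T \<le> card J\<close> \<open>card J \<le> n\<close> unfolding Wnk_def
    by (intro Cn_mono[OF Cn_mult_u_pow]) auto
  moreover have "(vderiv ^^ (n - card J + card T)) (\<lambda>x. f x * u_pow (card T) x) \<in> W0"
    using f \<open>card T \<le> card J\<close> unfolding Wnk_def by blast
  ultimately obtain \<phi> where "fourier_form n \<phi>" "continuous_on UNIV \<phi>"
    "\<And>q :: nat \<Rightarrow> real. inj_on q ({0..n} - (J - T))
      \<Longrightarrow> \<phi> q = lagrange_dd ({0..n} - (J - T)) (\<lambda>x. f x * u_pow (card T) x) q"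
    by (rule fourier_form_lagrange_dd_extension[OF Diff_subset]) blast
  then show ?thesis
    by (rule that)
qed

lemma BS_divdiff_mult_u_multi:
  assumes \<alpha>: "\<forall>j\<in>{1..n}. \<alpha> j \<in> {0, 1}" and f: "f \<in> Wnk n (\<Sum>j\<in>{1..n}. \<alpha> j)"
  shows "BS n (\<lambda>l. divdiff n f l * u_multi n \<alpha> l)"
proof -
  define J where "J = {j\<in>{1..n}. \<alpha> j = 1}"
  have J: "finite J" "J \<subseteq> {1..n}"
    unfolding J_def by auto
  have f: "f \<in> Wnk n (card J)" and f_Cn: "f \<in> Cn n"
    using f \<alpha> by (simp_all add: J_def sum_0_1_eq_card Wnk_def)
  \<comment> \<open>The subset T of J labels the divided difference of f u^|T| on the nodes outside J - T.\<close>
  have "\<exists>\<phi>. \<forall>T\<in>Pow J. fourier_form n (\<phi> T) \<and> continuous_on UNIV (\<phi> T) \<and>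
      (\<forall>q. inj_on q ({0..n} - (J - T))
        \<longrightarrow> \<phi> T q = lagrange_dd ({0..n} - (J - T)) (\<lambda>x. f x * u_pow (card T) x) q)"
  proof (rule bchoice, rule ballI)
    fix T assume "T \<in> Pow J"
    then obtain \<phi> where "fourier_form n \<phi>" "continuous_on UNIV \<phi>"
      "\<And>q. inj_on q ({0..n} - (J - T)) \<Longrightarrow> \<phi> q = lagrange_dd ({0..n} - (J - T)) (\<lambda>x. f x * u_pow (card T) x) q"
      by (rule fourier_form_lagrange_dd_Wnk[OF f J(2) PowD]) blast
    then show "\<exists>\<phi>. fourier_form n \<phi> \<and> continuous_on UNIV \<phi> \<and> (\<forall>q. inj_on q ({0..n} - (J - T))
        \<longrightarrow> \<phi> q = lagrange_dd ({0..n} - (J - T)) (\<lambda>x. f x * u_pow (card T) x) q)"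
      by blast
  qed
  then obtain \<phi> where \<phi>: "\<forall>T\<in>Pow J. fourier_form n (\<phi> T) \<and> continuous_on UNIV (\<phi> T) \<and>
      (\<forall>q. inj_on q ({0..n} - (J - T))
        \<longrightarrow> \<phi> T q = lagrange_dd ({0..n} - (J - T)) (\<lambda>x. f x * u_pow (card T) x) q)"
    by blast
  define \<psi> where "\<psi> l = (\<Sum>T\<in>Pow J. (-1) ^ card (J - T) * \<phi> T l)" for l
  have eq: "divdiff n f l * u_multi n \<alpha> l = \<psi> l" for l
  proof (rule eq_on_open_if_eq_on_injective[where n = n])
    show "continuous_on UNIV (\<lambda>l. divdiff n f l * u_multi n \<alpha> l)"
      unfolding u_multi_def using continuous_on_divdiff[OF f_Cn] by (intro continuous_intros) auto
    show "continuous_on UNIV \<psi>"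
      unfolding \<psi>_def using \<phi> by (intro continuous_intros) auto
  next
    fix q :: "nat \<Rightarrow> real"
    assume q: "inj_on q {0..n}"
    then have "divdiff n f q * u_multi n \<alpha> q = lagrange_dd {0..n} f q * (\<Prod>j\<in>J. complex_of_real (q j) - \<i>)"
      using \<alpha> by (simp add: divdiff_eq_hermite_genocchi[OF f_Cn] hermite_genocchi_eq_lagrange_dd[OF f_Cn]
          u_multi_0_1 J_def)
    also have "\<dots> = \<psi> q"
      unfolding \<psi>_def using q J(2)
      by (simp add: lagrange_dd_times_prod_linear \<phi> u_pow_def inj_on_subset[OF q] subset_trans)
    finally show "divdiff n f q * u_multi n \<alpha> q = \<psi> q" .
  qed auto
  have "fourier_form n \<psi>"
    unfolding \<psi>_def using J(1) \<phi> by (intro fourier_form_sum fourier_form_scale) auto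
  then show ?thesis
    unfolding eq by (rule fourier_form_BS)
qed

theorem theorem3p6:
  fixes n :: nat and f :: "real \<Rightarrow> complex" and \<alpha> :: "nat \<Rightarrow> nat"
  shows "(f \<in> Wn n \<longrightarrow> BS n (\<lambda>l. divdiff n f l * u_multi n (\<lambda>_. 1) l))
       \<and> ((\<forall>j\<in>{1..n}. \<alpha> j \<in> {0, 1}) \<and> f \<in> Wnk n (\<Sum>j\<in>{1..n}. \<alpha> j)
            \<longrightarrow> BS n (\<lambda>l. divdiff n f l * u_multi n \<alpha> l))"
proof (intro conjI impI)
  assume "f \<in> Wn n"
  then have "f \<in> Wnk n (\<Sum>j\<in>{1..n}. 1)"
    by (simp add: Wn_def Wnk_def)
  then show "BS n (\<lambda>l. divdiff n f l * u_multi n (\<lambda>_. 1) l)"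
    by (intro BS_divdiff_mult_u_multi) simp_all
next
  assume "(\<forall>j\<in>{1..n}. \<alpha> j \<in> {0, 1}) \<and> f \<in> Wnk n (\<Sum>j\<in>{1..n}. \<alpha> j)"
  then show "BS n (\<lambda>l. divdiff n f l * u_multi n \<alpha> l)"
    by (intro BS_divdiff_mult_u_multi) simp_all
qed

end
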